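(* Let $N$ be a nonnegative integer and let $f,a_1,d_1,d_2\in\mathbb{C}$ be such that every hypergeometric series below is well defined (no lower parameter is a nonpositive integer) and all denominators in the definitions of $h$ and $k$ below are nonzero. Put $$h=\frac{\frac f2\,(f-1-d_1-d_2+N)(1-\frac f2)}{\frac f2(\frac f2-1)-a_1(2f-2-d_1-d_2-a_1+N)},\qquad k=\frac{h(1+d_1+a_1-f)(1+d_2+a_1-f)}{d_1d_2-h(1+d_1+d_2+a_1-f)}.$$ Then $$ {}_{8}F_{7}\left[\begin{matrix} f-1,\ \frac{f+1}{2},\ a_1,\ \frac f2+1,\ d_1,\ d_2,\ 2f-2-d_1-d_2-a_1+N,\ -N\\ \frac{f-1}{2},\ f-a_1,\ \frac f2-1,\ f-d_1,\ f-d_2,\ 2+a_1+d_1+d_2-f-N,\ f+N\end{matrix};1\right]$$ $$=\frac{(f)_N\,(f-d_1-d_2)_N\,(f-a_1-d_1-1)_N\,(f-a_1-d_2-1)_N}{(f-d_1)_N\,(f-d_2)_N\,(f-a_1)_N\,(f-a_1-d_1-d_2-1)_N}\cdot\frac{(k+1)_N}{(k)_N}.$$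
   Context: $(x)_n$ denotes the Pochhammer symbol: $(x)_0=1$, $(x)_n=x(x+1)\cdots(x+n-1)$ for $n\ge1$. The generalized hypergeometric function is $${}_{r+1}F_{r}\left[\begin{matrix} a_1,\dots,a_{r+1}\\ b_1,\dots,b_r\end{matrix};z\right]=\sum_{n=0}^{\infty}\frac{(a_1)_n\cdots(a_{r+1})_n}{(b_1)_n\cdots(b_r)_n\,n!}z^n ,$$ where no $b_i$ is a nonpositive integer; when one upper parameter equals $-N$ with $N$ a nonnegative integer the series terminates. *)

theory Defs
  imports "HOL-Analysis.Analysis"
begin

text \<open>Terminating generalized hypergeometric series at argument 1, truncated at index N
  (valid when one upper parameter equals -N: all later terms vanish).\<close>
definition hyp_term :: "complex list \<Rightarrow> complex list \<Rightarrow> complex \<Rightarrow> nat \<Rightarrow> complex" where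
  "hyp_term as bs z n =
     (\<Prod>a\<leftarrow>as. pochhammer a n) / ((\<Prod>b\<leftarrow>bs. pochhammer b n) * of_nat (fact n)) * z ^ n"

definition hypergeom_term :: "nat \<Rightarrow> complex list \<Rightarrow> complex list \<Rightarrow> complex \<Rightarrow> complex" where
  "hypergeom_term N as bs z = (\<Sum>n\<le>N. hyp_term as bs z n)"

definition nonpos_int :: "complex \<Rightarrow> bool" where
  "nonpos_int x \<longleftrightarrow> (\<exists>m::nat. x = - of_nat m)"

end

theory Submission
  imports Defs
begin

(* Put E = 2f-2-d1-d2-a1+N.  Splitting off the very-well-poised factors, the term of the 8F7 series
   is the term of the very-well-poised 7F6 series with parameters (f-1; a1, d1, d2, E; -N), times the
   quadratic (f/2+m)(f/2-1+m) / (f/2 (f/2-1)).  That quadratic is an affine combination of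
   (a1+m)(f-1-a1+m) and (E+m)(f-1-E+m), and multiplying the 7F6 term by either of them raises a1,
   resp. E, by one, up to a constant factor.  Both resulting series satisfy the hypothesis of Jackson's summation, which
   follows by the WZ method (induction on N with a telescoping certificate), and combining the
   two closed forms gives the stated product, where (k+1)_N/(k)_N = (k+N)/k.
   On the way many parameter combinations must be non-integers.  Once denominators are cleared the
   identity becomes an equation between polynomials in (f, a1, d1, d2), so it extends to all
   parameters by continuity along a complex line meeting the non-generic set only countably often. *)

section \<open>Jackson's summation\<close>

(* Rewriting with these rules and mult_ac turns a product of quotients into one quotient of two
   AC-normalised products, so rearrangements of the same factors become syntactically equal. *)
lemmas fraction_flatten = times_divide_eq_left times_divide_eq_right divide_divide_eq_left divide_divide_eq_right

lemma nonzero_if_diff_Ints: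
  fixes x y :: "'a::ring_1"
  assumes "x \<notin> \<int>" "y - x \<in> \<int>"
  shows "y \<noteq> 0"
  using assms by auto

lemma not_Ints_if_diff_Ints:
  fixes x y :: "'a::ring_1"
  assumes "x \<notin> \<int>" "y - x \<in> \<int>"
  shows "y \<notin> \<int>"
  using assms Ints_diff[of y "y - x"] by auto

lemma pochhammer_nonzero_if_not_Ints:
  fixes x :: complex
  shows "x \<notin> \<int> \<Longrightarrow> pochhammer x n \<noteq> 0"
  by (auto simp: pochhammer_eq_0_iff)

lemma pochhammer_plus1: fixes z :: "'a::field"
  assumes "z \<noteq> 0" shows "pochhammer (z + 1) n = (z + of_nat n) * pochhammer z n / z"
proof -
  have "z * pochhammer (z + 1) n = (z + of_nat n) * pochhammer z n"
    using pochhammer_rec[of z n] pochhammer_rec'[of z n] by simp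
  then show ?thesis using assms by (simp add: field_simps)
qed

lemma pochhammer_eq_plus1: fixes z :: "'a::field"
  assumes "z + of_nat n \<noteq> 0" shows "pochhammer z n = z * pochhammer (z + 1) n / (z + of_nat n)"
proof -
  have "z * pochhammer (z + 1) n = (z + of_nat n) * pochhammer z n"
    using pochhammer_rec[of z n] pochhammer_rec'[of z n] by simp
  then show ?thesis using assms by (simp add: field_simps)
qed

lemma pochhammer_minus_of_nat:
  "pochhammer (- of_nat N :: 'a::field_char_0) k
     = (of_nat N + 1 - of_nat k) * pochhammer (- of_nat (Suc N)) k / (of_nat N + 1)"
proof -
  have "pochhammer (- of_nat N :: 'a) k = pochhammer (- of_nat (Suc N) + 1) k"
    by simp
  also have "\<dots> = (- of_nat (Suc N) + of_nat k) * pochhammer (- of_nat (Suc N)) k / (- of_nat (Suc N))"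
    by (rule pochhammer_plus1) (metis neg_equal_0_iff_equal of_nat_eq_0_iff nat.distinct(1))
  also have "\<dots> = (of_nat N + 1 - of_nat k) * pochhammer (- of_nat (Suc N)) k / (of_nat N + 1)"
  proof -
    have "- of_nat (Suc N) + of_nat k = - (of_nat N + 1 - of_nat k :: 'a)"
      "- of_nat (Suc N) = - (of_nat N + 1 :: 'a)" by simp_all
    then show ?thesis by (simp only: mult_minus_left minus_divide_divide)
  qed
  finally show ?thesis .
qed

definition well_poised_term :: "complex \<Rightarrow> complex \<Rightarrow> complex \<Rightarrow> complex \<Rightarrow> complex \<Rightarrow> nat \<Rightarrow> nat \<Rightarrow> complex" where
  "well_poised_term a b c d e N k =
     pochhammer a k * pochhammer b k * pochhammer c k * pochhammer d k * pochhammer e k * pochhammer (- of_nat N) k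
     / (pochhammer (1+a-b) k * pochhammer (1+a-c) k * pochhammer (1+a-d) k * pochhammer (1+a-e) k
        * pochhammer (1 + a + of_nat N) k * of_nat (fact k))"

lemma well_poised_term_Suc:
  "well_poised_term a b c d e N (Suc k) = well_poised_term a b c d e N k *
     ((a + of_nat k) * (b + of_nat k) * (c + of_nat k) * (d + of_nat k) * (e + of_nat k) * (- of_nat N + of_nat k)
      / ((1+a-b + of_nat k) * (1+a-c + of_nat k) * (1+a-d + of_nat k) * (1+a-e + of_nat k)
         * (1 + a + of_nat N + of_nat k) * of_nat (Suc k)))"
  unfolding well_poised_term_def pochhammer_Suc fact_Suc of_nat_mult of_nat_id by (simp only: fraction_flatten mult_ac)

lemma well_poised_term_eq_Suc:
  assumes "e + of_nat k \<noteq> 0" "a - e \<noteq> 0" "1 + a + of_nat N + of_nat k \<noteq> 0"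
  shows "well_poised_term a b c d e N k = well_poised_term a b c d (e + 1) (Suc N) k *
    (e / (e + of_nat k) * ((of_nat N + 1 - of_nat k) / (of_nat N + 1))
     * ((a - e) / (a - e + of_nat k)) * ((1 + a + of_nat N + of_nat k) / (1 + a + of_nat N)))"
proof -
  have "pochhammer e k = e * pochhammer (e + 1) k / (e + of_nat k)"
    using assms(1) by (rule pochhammer_eq_plus1)
  moreover have "pochhammer (1 + a - e) k = (a - e + of_nat k) * pochhammer (1 + a - (e + 1)) k / (a - e)"
  proof -
    have h: "1 + a - (e + 1) = a - e" "a - e + 1 = 1 + a - e" by simp_all
    show ?thesis using pochhammer_plus1[OF assms(2), of k] unfolding h .
  qed
  moreover have "pochhammer (1 + a + of_nat N) k = (1 + a + of_nat N) * pochhammer (1 + a + of_nat (Suc N)) k / (1 + a + of_nat N + of_nat k)"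
    using pochhammer_eq_plus1[OF assms(3)] by (simp add: add_ac)
  ultimately show ?thesis
    unfolding well_poised_term_def pochhammer_minus_of_nat[of N] by (simp only: fraction_flatten mult_ac)
qed

lemma well_poised_term_eq_0: "N < k \<Longrightarrow> well_poised_term a b c d e N k = 0"
  unfolding well_poised_term_def by (simp add: pochhammer_of_nat_eq_0_lemma)

definition jackson_term :: "complex \<Rightarrow> complex \<Rightarrow> complex \<Rightarrow> complex \<Rightarrow> complex \<Rightarrow> nat \<Rightarrow> nat \<Rightarrow> complex" where
  "jackson_term a b c d e N k = (a + 2 * of_nat k) / a * well_poised_term a b c d e N k"

definition jackson_value :: "complex \<Rightarrow> complex \<Rightarrow> complex \<Rightarrow> complex \<Rightarrow> nat \<Rightarrow> complex" where
  "jackson_value a b c d N =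
     pochhammer (1+a) N * pochhammer (1+a-b-c) N * pochhammer (1+a-b-d) N * pochhammer (1+a-c-d) N
     / (pochhammer (1+a-b) N * pochhammer (1+a-c) N * pochhammer (1+a-d) N * pochhammer (1+a-b-c-d) N)"

definition jackson_ratio :: "complex \<Rightarrow> complex \<Rightarrow> complex \<Rightarrow> complex \<Rightarrow> nat \<Rightarrow> complex" where
  "jackson_ratio a b c d N =
     (1 + a + of_nat N) * (1+a-b-c + of_nat N) * (1+a-b-d + of_nat N) * (1+a-c-d + of_nat N)
     / ((1+a-b + of_nat N) * (1+a-c + of_nat N) * (1+a-d + of_nat N) * (1+a-b-c-d + of_nat N))"

lemma jackson_value_Suc: "jackson_value a b c d (Suc N) = jackson_ratio a b c d N * jackson_value a b c d N"
  unfolding jackson_value_def jackson_ratio_def pochhammer_Suc by (simp only: fraction_flatten mult_ac)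

definition jackson_cert_factor :: "complex \<Rightarrow> complex \<Rightarrow> complex \<Rightarrow> complex \<Rightarrow> complex \<Rightarrow> nat \<Rightarrow> complex" where
  "jackson_cert_factor a b c d e N =
     - (1 + e + of_nat N) / ((of_nat N + 1) * a * (1+a-b + of_nat N) * (1+a-c + of_nat N) * (1+a-d + of_nat N))"

definition jackson_wz_cert :: "complex \<Rightarrow> complex \<Rightarrow> complex \<Rightarrow> complex \<Rightarrow> complex \<Rightarrow> nat \<Rightarrow> nat \<Rightarrow> complex" where
  "jackson_wz_cert a b c d e N k = jackson_cert_factor a b c d e N * well_poised_term a b c d (e + 1) (Suc N) k
     * (of_nat k * (a-b + of_nat k) * (a-c + of_nat k) * (a-d + of_nat k) * (1 + a + of_nat N + of_nat k) / (e + of_nat k))"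

lemma divide_mult_divide_cancel:
  fixes P Q B E :: "'a::field"
  assumes "B \<noteq> 0" "E \<noteq> 0"
  shows "(P * E) / (Q * B) * (B / E) = P / Q"
  using assms by (simp add: field_simps)

lemma jackson_wz_cert_Suc:
  assumes "1+a-b + of_nat k \<noteq> 0" "1+a-c + of_nat k \<noteq> 0" "1+a-d + of_nat k \<noteq> 0"
    "1 + a + of_nat (Suc N) + of_nat k \<noteq> 0" "e + 1 + of_nat k \<noteq> 0"
  shows "jackson_wz_cert a b c d e N (Suc k) = jackson_cert_factor a b c d e N * (well_poised_term a b c d (e + 1) (Suc N) k
     * ((a + of_nat k) * (b + of_nat k) * (c + of_nat k) * (d + of_nat k) * (of_nat k - of_nat N - 1) / (a - e + of_nat k)))"
proof -
  let ?A = "(a + of_nat k) * (b + of_nat k) * (c + of_nat k) * (d + of_nat k) * (of_nat k - of_nat N - 1)"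
  let ?B = "of_nat (Suc k) * (1+a-b + of_nat k) * (1+a-c + of_nat k) * (1+a-d + of_nat k) * (1 + a + of_nat (Suc N) + of_nat k)"
  have q: "a-b + of_nat (Suc k) = 1+a-b + of_nat k" "a-c + of_nat (Suc k) = 1+a-c + of_nat k"
    "a-d + of_nat (Suc k) = 1+a-d + of_nat k" "1 + a + of_nat N + of_nat (Suc k) = 1 + a + of_nat (Suc N) + of_nat k"
    "e + of_nat (Suc k) = e + 1 + of_nat k" "1 + a - (e + 1) + of_nat k = a - e + of_nat k"
    "- of_nat (Suc N) + of_nat k = of_nat k - of_nat N - (1::complex)"
    by simp_all
  have "(a + of_nat k) * (b + of_nat k) * (c + of_nat k) * (d + of_nat k) * (e + 1 + of_nat k) * (- of_nat (Suc N) + of_nat k)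
      / ((1+a-b + of_nat k) * (1+a-c + of_nat k) * (1+a-d + of_nat k) * (1 + a - (e + 1) + of_nat k)
         * (1 + a + of_nat (Suc N) + of_nat k) * of_nat (Suc k))
      * (of_nat (Suc k) * (a-b + of_nat (Suc k)) * (a-c + of_nat (Suc k)) * (a-d + of_nat (Suc k))
         * (1 + a + of_nat N + of_nat (Suc k)) / (e + of_nat (Suc k)))
    = (?A * (e + 1 + of_nat k)) / ((a - e + of_nat k) * ?B) * (?B / (e + 1 + of_nat k))"
    unfolding q by (simp only: mult_ac)
  also have "\<dots> = ?A / (a - e + of_nat k)"
    by (rule divide_mult_divide_cancel) (use assms in \<open>simp_all del: of_nat_Suc\<close>)
  finally show ?thesis
    unfolding jackson_wz_cert_def well_poised_term_Suc by (simp only: mult.assoc)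
qed

lemma mult_divide_factor_cancel:
  fixes X Y Z M :: "'a::field"
  shows "Y = Z * M \<Longrightarrow> Z \<noteq> 0 \<Longrightarrow> Y * (X / Z) = M * X"
  by simp

lemma jackson_wz_identity:
  fixes a b c d n k e :: complex
  assumes e: "e = 1 + 2*a - b - c - d + n"
    and nz: "a \<noteq> 0" "n + 1 \<noteq> 0" "1+a-b+n \<noteq> 0" "1+a-c+n \<noteq> 0" "1+a-d+n \<noteq> 0" "1+a-b-c-d+n \<noteq> 0"
      "e + k \<noteq> 0" "a - e + k \<noteq> 0" "1 + a + n \<noteq> 0"
  shows "(a + 2*k) / a
    = (1+a+n) * (1+a-b-c+n) * (1+a-b-d+n) * (1+a-c-d+n) / ((1+a-b+n) * (1+a-c+n) * (1+a-d+n) * (1+a-b-c-d+n))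
        * ((a + 2*k) / a * (e / (e + k)) * ((n + 1 - k) / (n + 1)) * ((a - e) / (a - e + k)) * ((1 + a + n + k) / (1 + a + n)))
      + - (1 + e + n) / ((n + 1) * a * (1+a-b+n) * (1+a-c+n) * (1+a-d+n))
        * ((a + k) * (b + k) * (c + k) * (d + k) * (k - n - 1) / (a - e + k))
      - - (1 + e + n) / ((n + 1) * a * (1+a-b+n) * (1+a-c+n) * (1+a-d+n))
        * (k * (a-b+k) * (a-c+k) * (a-d+k) * (1 + a + n + k) / (e + k))"
    (is "?T1 = ?T2 + ?T3 - ?T4")
proof -
  define D1 where "D1 = (1+a-b+n) * (1+a-c+n) * (1+a-d+n)"
  define D2 where "D2 = 1+a-b-c-d+n"
  define Y where "Y = a * (n + 1) * (1 + a + n) * D1 * D2 * (e + k) * (a - e + k)"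
  have Y: "Y \<noteq> 0" unfolding Y_def D1_def D2_def using nz by simp
  have y1: "Y * ?T1 = ((n+1) * (1+a+n) * D1 * D2 * (e+k) * (a-e+k)) * (a + 2*k)"
    by (rule mult_divide_factor_cancel) (simp_all add: Y_def mult_ac nz)
  have y2: "Y * ?T2 = 1 * ((1+a+n) * (1+a-b-c+n) * (1+a-b-d+n) * (1+a-c-d+n) * ((a + 2*k) * e * (n+1-k) * (a-e) * (1+a+n+k)))"
    unfolding times_divide_times_eq
    by (rule mult_divide_factor_cancel) (simp_all add: Y_def D1_def D2_def mult_ac nz)
  have y3: "Y * ?T3 = ((1+a+n) * D2 * (e+k)) * (- (1+e+n) * ((a+k) * (b+k) * (c+k) * (d+k) * (k-n-1)))"
    unfolding times_divide_times_eq
    by (rule mult_divide_factor_cancel) (simp_all add: Y_def D1_def D2_def mult_ac nz)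
  have y4: "Y * ?T4 = ((1+a+n) * D2 * (a-e+k)) * (- (1+e+n) * (k * (a-b+k) * (a-c+k) * (a-d+k) * (1+a+n+k)))"
    unfolding times_divide_times_eq
    by (rule mult_divide_factor_cancel) (simp_all add: Y_def D1_def D2_def mult_ac nz)
  have "((n+1) * (1+a+n) * D1 * D2 * (e+k) * (a-e+k)) * (a + 2*k)
    = 1 * ((1+a+n) * (1+a-b-c+n) * (1+a-b-d+n) * (1+a-c-d+n) * ((a + 2*k) * e * (n+1-k) * (a-e) * (1+a+n+k)))
      + ((1+a+n) * D2 * (e+k)) * (- (1+e+n) * ((a+k) * (b+k) * (c+k) * (d+k) * (k-n-1)))
      - ((1+a+n) * D2 * (a-e+k)) * (- (1+e+n) * (k * (a-b+k) * (a-c+k) * (a-d+k) * (1+a+n+k)))"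
    unfolding D1_def D2_def e by algebra
  then have "Y * ?T1 = Y * ?T2 + Y * ?T3 - Y * ?T4"
    unfolding y1 y2 y3 y4 .
  then have "Y * ?T1 = Y * (?T2 + ?T3 - ?T4)"
    by (simp only: distrib_left right_diff_distrib)
  then show ?thesis
    by (simp only: mult_left_cancel[OF Y])
qed

lemma jackson_telescoping:
  fixes a b c d e :: complex
  assumes ints: "a \<notin> \<int>" "a - b \<notin> \<int>" "a - c \<notin> \<int>" "a - d \<notin> \<int>" "a - b - c - d \<notin> \<int>" "2*a - b - c - d \<notin> \<int>"
    and e: "e = 1 + 2*a - b - c - d + of_nat N"
  shows "jackson_term a b c d (e + 1) (Suc N) k
    = jackson_ratio a b c d N * jackson_term a b c d e N k + jackson_wz_cert a b c d e N (Suc k) - jackson_wz_cert a b c d e N k"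
proof -
  have neg: "- (a - b - c - d) \<notin> \<int>" using ints(5) by (simp only: minus_in_Ints_iff not_False_eq_True)
  note nz = nonzero_if_diff_Ints[OF ints(1)] nonzero_if_diff_Ints[OF ints(2)] nonzero_if_diff_Ints[OF ints(3)]
    nonzero_if_diff_Ints[OF ints(4)] nonzero_if_diff_Ints[OF ints(5)] nonzero_if_diff_Ints[OF ints(6)]
    nonzero_if_diff_Ints[OF neg]
  have nz_a: "a \<noteq> 0" "1 + a + of_nat N \<noteq> 0" "1 + a + of_nat N + of_nat k \<noteq> 0" "1 + a + of_nat (Suc N) + of_nat k \<noteq> 0"
    by (rule nz(1); simp)+
  have nz_b: "1+a-b + of_nat N \<noteq> 0" "1+a-b + of_nat k \<noteq> 0" by (rule nz(2); simp)+
  have nz_c: "1+a-c + of_nat N \<noteq> 0" "1+a-c + of_nat k \<noteq> 0" by (rule nz(3); simp)+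
  have nz_d: "1+a-d + of_nat N \<noteq> 0" "1+a-d + of_nat k \<noteq> 0" by (rule nz(4); simp)+
  have nz_bcd: "1+a-b-c-d + of_nat N \<noteq> 0" by (rule nz(5)) simp
  have nz_e: "e + of_nat k \<noteq> 0" "e + 1 + of_nat k \<noteq> 0" by (rule nz(6); simp add: e)+
  have nz_ae: "a - e \<noteq> 0" "a - e + of_nat k \<noteq> 0" by (rule nz(7); simp add: e)+
  have nz_N: "of_nat N + 1 \<noteq> (0::complex)"
    by (metis of_nat_Suc of_nat_eq_0_iff add.commute nat.distinct(1))
  have comb: "(r * x + c * y - c * z) * w = r * (w * x) + c * (w * y) - c * w * z"
    for r x c y z w :: complex by (simp only: ring_distribs mult_ac)
  have term_eq: "jackson_term a b c d e N k = well_poised_term a b c d (e + 1) (Suc N) k *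
      ((a + 2 * of_nat k) / a * (e / (e + of_nat k)) * ((of_nat N + 1 - of_nat k) / (of_nat N + 1))
       * ((a - e) / (a - e + of_nat k)) * ((1 + a + of_nat N + of_nat k) / (1 + a + of_nat N)))"
    unfolding jackson_term_def well_poised_term_eq_Suc[OF nz_e(1) nz_ae(1) nz_a(3)] by (simp only: mult_ac)
  have "(a + 2 * of_nat k) / a
    = jackson_ratio a b c d N *
        ((a + 2 * of_nat k) / a * (e / (e + of_nat k)) * ((of_nat N + 1 - of_nat k) / (of_nat N + 1))
         * ((a - e) / (a - e + of_nat k)) * ((1 + a + of_nat N + of_nat k) / (1 + a + of_nat N)))
      + jackson_cert_factor a b c d e N *
        ((a + of_nat k) * (b + of_nat k) * (c + of_nat k) * (d + of_nat k) * (of_nat k - of_nat N - 1) / (a - e + of_nat k))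
      - jackson_cert_factor a b c d e N *
        (of_nat k * (a-b + of_nat k) * (a-c + of_nat k) * (a-d + of_nat k) * (1 + a + of_nat N + of_nat k) / (e + of_nat k))"
    unfolding jackson_ratio_def jackson_cert_factor_def
    by (rule jackson_wz_identity[OF e]) (use nz_a nz_b nz_c nz_d nz_bcd nz_e nz_ae nz_N in auto)
  from arg_cong[OF this, of "\<lambda>T. T * well_poised_term a b c d (e + 1) (Suc N) k"] show ?thesis
    unfolding comb jackson_term_def[of a b c d "e + 1"] term_eq jackson_wz_cert_Suc[OF nz_b(2) nz_c(2) nz_d(2) nz_a(4) nz_e(2)]
      jackson_wz_cert_def[of a b c d e N k] .
qed

theorem jackson_summation:
  fixes a b c d :: complex
  assumes "a \<notin> \<int>" "a - b \<notin> \<int>" "a - c \<notin> \<int>" "a - d \<notin> \<int>" "a - b - c - d \<notin> \<int>" "2*a - b - c - d \<notin> \<int>"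
  shows "(\<Sum>k\<le>N. jackson_term a b c d (1 + 2*a - b - c - d + of_nat N) N k) = jackson_value a b c d N"
proof (induction N)
  case 0
  have "a \<noteq> 0" using assms(1) by (rule nonzero_if_diff_Ints) simp
  then show ?case by (simp add: jackson_term_def well_poised_term_def jackson_value_def)
next
  case (Suc N)
  define e where "e = 1 + 2*a - b - c - d + of_nat N"
  have "(\<Sum>k\<le>Suc N. jackson_term a b c d (1 + 2*a - b - c - d + of_nat (Suc N)) (Suc N) k)
      = (\<Sum>k<Suc (Suc N). jackson_ratio a b c d N * jackson_term a b c d e N k
           + (jackson_wz_cert a b c d e N (Suc k) - jackson_wz_cert a b c d e N k))"
  proof -
    have "1 + 2*a - b - c - d + of_nat (Suc N) = e + 1" by (simp add: e_def)
    then show ?thesis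
      unfolding lessThan_Suc_atMost
      by (intro sum.cong refl) (simp only: jackson_telescoping[OF assms e_def] add_diff_eq)
  qed
  also have "\<dots> = jackson_ratio a b c d N * (\<Sum>k<Suc (Suc N). jackson_term a b c d e N k)
      + (jackson_wz_cert a b c d e N (Suc (Suc N)) - jackson_wz_cert a b c d e N 0)"
    by (simp only: sum.distrib sum_distrib_left sum_lessThan_telescope)
  also have "\<dots> = jackson_value a b c d (Suc N)"
  proof -
    have "(\<Sum>k<Suc (Suc N). jackson_term a b c d e N k) = (\<Sum>k\<le>N. jackson_term a b c d e N k)"
      by (simp add: lessThan_Suc_atMost jackson_term_def well_poised_term_eq_0)
    then show ?thesis
      using Suc.IH unfolding e_def[symmetric] by (simp add: jackson_value_Suc jackson_wz_cert_def well_poised_term_eq_0)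
  qed
  finally show ?case .
qed

lemma jackson_term_swap: "jackson_term a b c d e N m = jackson_term a e c d b N m"
  unfolding jackson_term_def well_poised_term_def by (simp only: mult_ac)

lemma jackson_term_b_plus1:
  assumes "b \<noteq> 0" "a - b + of_nat m \<noteq> 0"
  shows "jackson_term a (b + 1) c d e N m
    = jackson_term a b c d e N m * ((b + of_nat m) / b * ((a - b + of_nat m) / (a - b)))"
proof -
  have "pochhammer (b + 1) m = (b + of_nat m) * pochhammer b m / b"
    using assms(1) by (rule pochhammer_plus1)
  moreover have "pochhammer (1 + a - (b + 1)) m = (a - b) * pochhammer (1 + a - b) m / (a - b + of_nat m)"
  proof -
    have h: "1 + a - (b + 1) = a - b" "a - b + 1 = 1 + a - b" by simp_all
    show ?thesis using pochhammer_eq_plus1[OF assms(2)] unfolding h .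
  qed
  ultimately show ?thesis
    unfolding jackson_term_def well_poised_term_def by (simp only: fraction_flatten mult_ac)
qed

lemma jackson_term_e_plus1:
  assumes "e \<noteq> 0" "a - e + of_nat m \<noteq> 0"
  shows "jackson_term a b c d (e + 1) N m
    = jackson_term a b c d e N m * ((e + of_nat m) / e * ((a - e + of_nat m) / (a - e)))"
  using jackson_term_b_plus1[OF assms, of c d b N] by (simp only: jackson_term_swap[of a b c d])

section \<open>Reduction of the 8F7 series to two Jackson sums\<close>

definition upper_params :: "complex \<Rightarrow> complex \<Rightarrow> complex \<Rightarrow> complex \<Rightarrow> nat \<Rightarrow> complex list" where
  "upper_params f a1 d1 d2 N = [f-1, (f+1)/2, a1, f/2+1, d1, d2, 2*f-2-d1-d2-a1 + of_nat N, - of_nat N]"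

definition lower_params :: "complex \<Rightarrow> complex \<Rightarrow> complex \<Rightarrow> complex \<Rightarrow> nat \<Rightarrow> complex list" where
  "lower_params f a1 d1 d2 N = [(f-1)/2, f-a1, f/2-1, f-d1, f-d2, 2+a1+d1+d2-f - of_nat N, f + of_nat N]"

lemma half_not_Ints:
  fixes x :: complex
  assumes "x \<notin> \<int>" shows "x / 2 \<notin> \<int>"
proof
  assume "x / 2 \<in> \<int>"
  then have "2 * (x / 2) \<in> \<int>" by (intro Ints_mult) simp_all
  then show False using assms by simp
qed

lemma halves_not_Ints:
  fixes f :: complex
  assumes f: "f \<notin> \<int>"
  shows "(f-1)/2 \<notin> \<int>" "f/2 \<notin> \<int>" "f/2 - 1 \<notin> \<int>"
proof -
  have "f - 1 \<notin> \<int>" by (rule not_Ints_if_diff_Ints[OF f]) simp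
  then show "(f-1)/2 \<notin> \<int>" by (rule half_not_Ints)
  show f2: "f/2 \<notin> \<int>" using f by (rule half_not_Ints)
  show "f/2 - 1 \<notin> \<int>" by (rule not_Ints_if_diff_Ints[OF f2]) simp
qed

lemma hyp_term_eq_jackson_term:
  fixes f a1 d1 d2 :: complex and N m :: nat
  assumes f: "f \<notin> \<int>"
  defines "E \<equiv> 2*f-2-d1-d2-a1 + of_nat N"
  shows "hyp_term (upper_params f a1 d1 d2 N) (lower_params f a1 d1 d2 N) 1 m
    = jackson_term (f-1) a1 d1 d2 E N m * ((f/2 + of_nat m) * (f/2 - 1 + of_nat m) / (f/2 * (f/2 - 1)))"
proof -
  note ints = halves_not_Ints[OF f]
  have nz: "f - 1 \<noteq> 0" "(f-1)/2 \<noteq> 0" "f/2 \<noteq> 0" "f/2 - 1 \<noteq> 0"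
    using ints f by (auto intro!: nonzero_if_diff_Ints)
  have R: "pochhammer ((f-1)/2) m \<noteq> 0" "pochhammer (f/2-1) m \<noteq> 0"
    using ints by (simp_all add: pochhammer_nonzero_if_not_Ints)
  have p1: "pochhammer ((f+1)/2) m = (f - 1 + 2 * of_nat m) * pochhammer ((f-1)/2) m / (f - 1)"
  proof -
    have "pochhammer ((f-1)/2 + 1) m = ((f-1)/2 + of_nat m) * pochhammer ((f-1)/2) m / ((f-1)/2)"
      using nz(2) by (rule pochhammer_plus1)
    moreover have "(f-1)/2 + 1 = (f+1)/2" by (simp add: field_simps)
    moreover have "((f-1)/2 + of_nat m) / ((f-1)/2) = (f - 1 + 2 * of_nat m) / (f - 1)"
      using nz(1) by (simp add: field_simps)
    ultimately show ?thesis by (metis times_divide_eq_left)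
  qed
  have p2: "pochhammer (f/2 + 1) m = (f/2 + of_nat m) * ((f/2 - 1 + of_nat m) * pochhammer (f/2-1) m / (f/2 - 1)) / (f/2)"
  proof -
    have "pochhammer (f/2 - 1 + 1) m = (f/2 - 1 + of_nat m) * pochhammer (f/2-1) m / (f/2 - 1)"
      using nz(4) by (rule pochhammer_plus1)
    then show ?thesis using pochhammer_plus1[OF nz(3), of m] by simp
  qed
  have q: "1 + (f-1) - a1 = f - a1" "1 + (f-1) - d1 = f - d1" "1 + (f-1) - d2 = f - d2"
    "1 + (f-1) - E = 2+a1+d1+d2-f - of_nat N" "1 + (f-1) + of_nat N = f + of_nat N"
    unfolding E_def by simp_all
  show ?thesis
    unfolding hyp_term_def upper_params_def lower_params_def jackson_term_def well_poised_term_def q E_def[symmetric]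
    by (simp only: list.map prod_list.Cons prod_list.Nil mult_1_right power_one p1 p2,
        simp only: fraction_flatten mult_ac, simp add: R)
qed

definition generic_params :: "complex \<Rightarrow> complex \<Rightarrow> complex \<Rightarrow> complex \<Rightarrow> bool" where
  "generic_params f a1 d1 d2 \<longleftrightarrow> f \<notin> \<int> \<and> a1 \<notin> \<int> \<and> f - a1 \<notin> \<int> \<and> f - d1 \<notin> \<int> \<and> f - d2 \<notin> \<int>
     \<and> f - d1 - d2 \<notin> \<int> \<and> f - a1 - d1 \<notin> \<int> \<and> f - a1 - d2 \<notin> \<int> \<and> f - a1 - d1 - d2 \<notin> \<int>
     \<and> 2*f - a1 - d1 - d2 \<notin> \<int> \<and> 2*f - 2*a1 - d1 - d2 \<notin> \<int>"

definition h_numer :: "complex \<Rightarrow> complex \<Rightarrow> complex \<Rightarrow> nat \<Rightarrow> complex" where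
  "h_numer f d1 d2 N = f/2 * (f-1-d1-d2 + of_nat N) * (1 - f/2)"

definition h_denom :: "complex \<Rightarrow> complex \<Rightarrow> complex \<Rightarrow> complex \<Rightarrow> nat \<Rightarrow> complex" where
  "h_denom f a1 d1 d2 N = f/2 * (f/2 - 1) - a1 * (2*f-2-d1-d2-a1 + of_nat N)"

definition k_numer :: "complex \<Rightarrow> complex \<Rightarrow> complex \<Rightarrow> complex \<Rightarrow> nat \<Rightarrow> complex" where
  "k_numer f a1 d1 d2 N = h_numer f d1 d2 N * (1+d1+a1-f) * (1+d2+a1-f)"

definition k_denom :: "complex \<Rightarrow> complex \<Rightarrow> complex \<Rightarrow> complex \<Rightarrow> nat \<Rightarrow> complex" where
  "k_denom f a1 d1 d2 N = h_denom f a1 d1 d2 N * d1 * d2 - h_numer f d1 d2 N * (1+d1+d2+a1-f)"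

definition closed_numer :: "complex \<Rightarrow> complex \<Rightarrow> complex \<Rightarrow> complex \<Rightarrow> nat \<Rightarrow> complex" where
  "closed_numer f a1 d1 d2 N =
     pochhammer f N * pochhammer (f-d1-d2) N * pochhammer (f-a1-d1-1) N * pochhammer (f-a1-d2-1) N"

definition closed_denom :: "complex \<Rightarrow> complex \<Rightarrow> complex \<Rightarrow> complex \<Rightarrow> nat \<Rightarrow> complex" where
  "closed_denom f a1 d1 d2 N =
     pochhammer (f-d1) N * pochhammer (f-d2) N * pochhammer (f-a1) N * pochhammer (f-a1-d1-d2-1) N"

lemma generic_params_nonzero:
  fixes f a1 d1 d2 :: complex and N :: nat
  assumes gen: "generic_params f a1 d1 d2"
  defines "E \<equiv> 2*f-2-d1-d2-a1 + of_nat N"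
  shows "f/2 * (f/2 - 1) * (a1 * (f-1-a1) - E * (f-1-E)) \<noteq> 0" "f-1-a1 \<noteq> 0" "f-1-a1 + of_nat N \<noteq> 0"
    "f-a1-d1-1 \<noteq> 0" "f-a1-d2-1 \<noteq> 0" "f-a1-d1-d2-1 \<noteq> 0" "f-a1-d1-d2-1 + of_nat N \<noteq> 0"
    "k_numer f a1 d1 d2 N \<noteq> 0"
proof -
  from gen have f: "f \<notin> \<int>" and ints: "f - a1 \<notin> \<int>" "f - a1 - d1 \<notin> \<int>" "f - a1 - d2 \<notin> \<int>"
    "f - a1 - d1 - d2 \<notin> \<int>" "f - d1 - d2 \<notin> \<int>"
    "- (2*f - 2*a1 - d1 - d2) \<notin> \<int>" "- (f - d1 - d2) \<notin> \<int>"
    "- (f - a1 - d1) \<notin> \<int>" "- (f - a1 - d2) \<notin> \<int>"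
    unfolding generic_params_def minus_in_Ints_iff by blast+
  have "f/2 \<notin> \<int>" using f by (rule half_not_Ints)
  then have nz_f: "f/2 \<noteq> 0" "f/2 - 1 \<noteq> 0" "1 - f/2 \<noteq> 0"
    by (auto intro!: nonzero_if_diff_Ints[of "f/2"])
  have "a1 - E \<noteq> 0" "f-1-a1-E \<noteq> 0"
    unfolding E_def
    by (rule nonzero_if_diff_Ints[OF ints(6)], simp add: algebra_simps)
       (rule nonzero_if_diff_Ints[OF ints(7)], simp add: algebra_simps)
  moreover have "a1 * (f-1-a1) - E * (f-1-E) = (a1 - E) * (f-1-a1-E)"
    by (simp add: algebra_simps)
  ultimately show "f/2 * (f/2 - 1) * (a1 * (f-1-a1) - E * (f-1-E)) \<noteq> 0"
    using nz_f by simp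
  show "f-1-a1 \<noteq> 0" "f-1-a1 + of_nat N \<noteq> 0"
    by (rule nonzero_if_diff_Ints[OF ints(1)], simp)+
  show "f-a1-d1-1 \<noteq> 0" by (rule nonzero_if_diff_Ints[OF ints(2)]) simp
  show "f-a1-d2-1 \<noteq> 0" by (rule nonzero_if_diff_Ints[OF ints(3)]) simp
  show "f-a1-d1-d2-1 \<noteq> 0" "f-a1-d1-d2-1 + of_nat N \<noteq> 0"
    by (rule nonzero_if_diff_Ints[OF ints(4)], simp)+
  have "f-1-d1-d2 + of_nat N \<noteq> 0" by (rule nonzero_if_diff_Ints[OF ints(5)]) simp
  moreover have "1+d1+a1-f \<noteq> 0" by (rule nonzero_if_diff_Ints[OF ints(8)]) (simp add: algebra_simps)
  moreover have "1+d2+a1-f \<noteq> 0" by (rule nonzero_if_diff_Ints[OF ints(9)]) (simp add: algebra_simps)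
  ultimately
  show "k_numer f a1 d1 d2 N \<noteq> 0"
    using nz_f unfolding k_numer_def h_numer_def by simp
qed

(* (u+m)(f-1-u+m) = m^2 + (f-1)m + u(f-1-u), and likewise (f/2+m)(f/2-1+m): all three quadratics
   differ only in their constant terms. *)
lemma quadratic_interpolation:
  fixes f x y m :: complex
  assumes "x * (f-1-x) - y * (f-1-y) \<noteq> 0"
  shows "(f/2 + m) * (f/2 - 1 + m) / (f/2 * (f/2 - 1))
    = ((f/2 * (f/2 - 1) - y * (f-1-y)) * ((x + m) * (f-1-x + m))
       + (x * (f-1-x) - f/2 * (f/2 - 1)) * ((y + m) * (f-1-y + m)))
      / (f/2 * (f/2 - 1) * (x * (f-1-x) - y * (f-1-y)))"
proof -
  define g where "g = f/2"
  have "f = 2 * g" by (simp add: g_def)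
  then have "(g * (g - 1) - y * (f-1-y)) * ((x + m) * (f-1-x + m)) + (x * (f-1-x) - g * (g - 1)) * ((y + m) * (f-1-y + m))
      = ((g + m) * (g - 1 + m)) * (x * (f-1-x) - y * (f-1-y))"
    by algebra
  then show ?thesis
    unfolding g_def[symmetric] by (simp only: mult_divide_mult_cancel_right[OF assms])
qed

lemma hyp_term_decomposition:
  fixes f a1 d1 d2 :: complex and N m :: nat
  assumes gen: "generic_params f a1 d1 d2"
  defines "E \<equiv> 2*f-2-d1-d2-a1 + of_nat N"
  shows "hyp_term (upper_params f a1 d1 d2 N) (lower_params f a1 d1 d2 N) 1 m
    = ((f/2 * (f/2 - 1) - E * (f-1-E)) * (a1 * (f-1-a1)) * jackson_term (f-1) (a1+1) d1 d2 E N m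
       + (a1 * (f-1-a1) - f/2 * (f/2 - 1)) * (E * (f-1-E)) * jackson_term (f-1) a1 d1 d2 (E+1) N m)
      / (f/2 * (f/2 - 1) * (a1 * (f-1-a1) - E * (f-1-E)))"
proof -
  from gen have f: "f \<notin> \<int>" and ints: "a1 \<notin> \<int>" "f - a1 \<notin> \<int>" "2*f - a1 - d1 - d2 \<notin> \<int>" "- (f - a1 - d1 - d2) \<notin> \<int>"
    unfolding generic_params_def minus_in_Ints_iff by blast+
  have nz_a: "a1 \<noteq> 0" "f-1-a1 \<noteq> 0" "f-1-a1 + of_nat m \<noteq> 0"
    by (rule nonzero_if_diff_Ints[OF ints(1)], simp)
       (rule nonzero_if_diff_Ints[OF ints(2)], simp)+
  have nz_E: "E \<noteq> 0" "f-1-E \<noteq> 0" "f-1-E + of_nat m \<noteq> 0"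
    unfolding E_def
    by (rule nonzero_if_diff_Ints[OF ints(3)], simp add: algebra_simps)
       (rule nonzero_if_diff_Ints[OF ints(4)], simp add: algebra_simps)+
  have nz_aE: "a1 * (f-1-a1) - E * (f-1-E) \<noteq> 0"
    using generic_params_nonzero(1)[OF gen, of N, folded E_def] by simp
  have comb: "T * ((c1 * (x * r1) + c2 * (y * r2)) / D) = (c1 * x * (T * r1) + c2 * y * (T * r2)) / D"
    for T c1 x r1 c2 y r2 D :: complex
    by (simp add: algebra_simps)
  have shift_ratios: "u * v * ((u + w) / u * ((v + w) / v)) = (u + w) * (v + w)" if "u \<noteq> 0" "v \<noteq> 0"
    for u v w :: complex
    using that by (simp add: field_simps)
  note x = shift_ratios[OF nz_a(1,2), of "of_nat m"] and y = shift_ratios[OF nz_E(1,2), of "of_nat m"]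
  show ?thesis
    unfolding hyp_term_eq_jackson_term[OF f, of a1 d1 d2 N m, folded E_def]
      quadratic_interpolation[OF nz_aE] x[symmetric] y[symmetric]
      jackson_term_b_plus1[OF nz_a(1) nz_a(3)] jackson_term_e_plus1[OF nz_E(1) nz_E(3)]
    by (rule comb)
qed

lemma jackson_value_plus1_eq_closed:
  assumes "f-1-a1 + of_nat N \<noteq> 0"
  shows "jackson_value (f-1) (a1+1) d1 d2 N
    = closed_numer f a1 d1 d2 N / closed_denom f a1 d1 d2 N * ((f-1-a1 + of_nat N) / (f-1-a1))"
proof -
  have "jackson_value (f-1) (a1+1) d1 d2 N
      = pochhammer f N * pochhammer (f-a1-d1-1) N * pochhammer (f-a1-d2-1) N * pochhammer (f-d1-d2) N
        / (pochhammer (f-1-a1) N * pochhammer (f-d1) N * pochhammer (f-d2) N * pochhammer (f-a1-d1-d2-1) N)"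
    unfolding jackson_value_def by (simp add: algebra_simps)
  also have "pochhammer (f-1-a1) N = (f-1-a1) * pochhammer (f-a1) N / (f-1-a1 + of_nat N)"
    using pochhammer_eq_plus1[OF assms] by simp
  finally show ?thesis
    unfolding closed_numer_def closed_denom_def by (simp only: fraction_flatten mult_ac)
qed

lemma jackson_value_eq_closed:
  assumes "f-a1-d1-1 \<noteq> 0" "f-a1-d2-1 \<noteq> 0" "f-a1-d1-d2-1 \<noteq> 0"
  shows "jackson_value (f-1) a1 d1 d2 N
    = closed_numer f a1 d1 d2 N / closed_denom f a1 d1 d2 N
      * ((f-a1-d1-1 + of_nat N) * (f-a1-d2-1 + of_nat N) * (f-a1-d1-d2-1)
         / ((f-a1-d1-1) * (f-a1-d2-1) * (f-a1-d1-d2-1 + of_nat N)))"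
proof -
  have "jackson_value (f-1) a1 d1 d2 N
      = pochhammer f N * pochhammer (f-a1-d1-1+1) N * pochhammer (f-a1-d2-1+1) N * pochhammer (f-d1-d2) N
        / (pochhammer (f-a1) N * pochhammer (f-d1) N * pochhammer (f-d2) N * pochhammer (f-a1-d1-d2-1+1) N)"
    unfolding jackson_value_def by (simp add: algebra_simps)
  then show ?thesis
    unfolding closed_numer_def closed_denom_def
      pochhammer_plus1[OF assms(1)] pochhammer_plus1[OF assms(2)] pochhammer_plus1[OF assms(3)]
    by (simp only: fraction_flatten mult_ac)
qed

lemma hypergeom_term_eq_jackson_values:
  fixes f a1 d1 d2 :: complex and N :: nat
  assumes gen: "generic_params f a1 d1 d2"
  defines "E \<equiv> 2*f-2-d1-d2-a1 + of_nat N"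
  shows "hypergeom_term N (upper_params f a1 d1 d2 N) (lower_params f a1 d1 d2 N) 1
    = ((f/2 * (f/2 - 1) - E * (f-1-E)) * (a1 * (f-1-a1)) * jackson_value (f-1) (a1+1) d1 d2 N
       + (a1 * (f-1-a1) - f/2 * (f/2 - 1)) * (E * (f-1-E)) * jackson_value (f-1) a1 d1 d2 N)
      / (f/2 * (f/2 - 1) * (a1 * (f-1-a1) - E * (f-1-E)))"
proof -
  from gen have ints: "f \<notin> \<int>" "f - a1 \<notin> \<int>" "f - d1 \<notin> \<int>" "f - d2 \<notin> \<int>"
    "f - a1 - d1 - d2 \<notin> \<int>" "2*f - a1 - d1 - d2 \<notin> \<int>"
    unfolding generic_params_def by blast+
  have e1: "1 + 2*(f-1) - (a1+1) - d1 - d2 + of_nat N = E" "1 + 2*(f-1) - a1 - d1 - d2 + of_nat N = E + 1"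
    unfolding E_def by (simp_all add: algebra_simps)
  have J1: "(\<Sum>m\<le>N. jackson_term (f-1) (a1+1) d1 d2 E N m) = jackson_value (f-1) (a1+1) d1 d2 N"
    unfolding e1(1)[symmetric]
  proof (rule jackson_summation)
    show "f - 1 \<notin> \<int>" by (rule not_Ints_if_diff_Ints[OF ints(1)]) simp
    show "f - 1 - (a1 + 1) \<notin> \<int>" by (rule not_Ints_if_diff_Ints[OF ints(2)]) simp
    show "f - 1 - d1 \<notin> \<int>" by (rule not_Ints_if_diff_Ints[OF ints(3)]) simp
    show "f - 1 - d2 \<notin> \<int>" by (rule not_Ints_if_diff_Ints[OF ints(4)]) simp
    show "f - 1 - (a1 + 1) - d1 - d2 \<notin> \<int>" by (rule not_Ints_if_diff_Ints[OF ints(5)]) simp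
    show "2 * (f - 1) - (a1 + 1) - d1 - d2 \<notin> \<int>" by (rule not_Ints_if_diff_Ints[OF ints(6)]) simp
  qed
  have J2: "(\<Sum>m\<le>N. jackson_term (f-1) a1 d1 d2 (E+1) N m) = jackson_value (f-1) a1 d1 d2 N"
    unfolding e1(2)[symmetric]
  proof (rule jackson_summation)
    show "f - 1 \<notin> \<int>" by (rule not_Ints_if_diff_Ints[OF ints(1)]) simp
    show "f - 1 - a1 \<notin> \<int>" by (rule not_Ints_if_diff_Ints[OF ints(2)]) simp
    show "f - 1 - d1 \<notin> \<int>" by (rule not_Ints_if_diff_Ints[OF ints(3)]) simp
    show "f - 1 - d2 \<notin> \<int>" by (rule not_Ints_if_diff_Ints[OF ints(4)]) simp
    show "f - 1 - a1 - d1 - d2 \<notin> \<int>" by (rule not_Ints_if_diff_Ints[OF ints(5)]) simp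
    show "2 * (f - 1) - a1 - d1 - d2 \<notin> \<int>" by (rule not_Ints_if_diff_Ints[OF ints(6)]) simp
  qed
  show ?thesis
    unfolding hypergeom_term_def hyp_term_decomposition[OF gen, of N, folded E_def] J1[symmetric] J2[symmetric]
    by (simp only: sum_divide_distrib[symmetric] sum.distrib sum_distrib_left mult.assoc)
qed

lemma k_ratio_identity:
  fixes f a1 d1 d2 n :: complex
  defines "E \<equiv> 2*f-2-d1-d2-a1 + n"
    and "hn \<equiv> f/2 * (f-1-d1-d2 + n) * (1 - f/2)"
  defines "kn \<equiv> hn * (1+d1+a1-f) * (1+d2+a1-f)"
    and "kd \<equiv> (f/2 * (f/2 - 1) - a1 * E) * d1 * d2 - hn * (1+d1+d2+a1-f)"
  assumes nz: "f/2 * (f/2 - 1) * (a1 * (f-1-a1) - E * (f-1-E)) \<noteq> 0" "f-1-a1 \<noteq> 0"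
    "(f-a1-d1-1) * (f-a1-d2-1) * (f-a1-d1-d2-1 + n) \<noteq> 0" "kn \<noteq> 0"
  shows "((f/2 * (f/2 - 1) - E * (f-1-E)) * (a1 * (f-1-a1)) * ((f-1-a1 + n) / (f-1-a1))
       + (a1 * (f-1-a1) - f/2 * (f/2 - 1)) * (E * (f-1-E))
         * ((f-a1-d1-1 + n) * (f-a1-d2-1 + n) * (f-a1-d1-d2-1) / ((f-a1-d1-1) * (f-a1-d2-1) * (f-a1-d1-d2-1 + n))))
      / (f/2 * (f/2 - 1) * (a1 * (f-1-a1) - E * (f-1-E)))
    = (kn + n * kd) / kn"
proof -
  have combine: "(c1 * x * (u' / u) + c2 * y * (p / q)) / D = (c1 * x * u' * q + c2 * y * p * u) / (u * q * D)"
    if "u \<noteq> 0" "q \<noteq> 0" "D \<noteq> 0" for c1 x u' u c2 y p q D :: complex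
    using that by (simp add: field_simps)
  define g where "g = f/2"
  have fg: "f = 2 * g" by (simp add: g_def)
  have poly: "((g * (g - 1) - E * (f-1-E)) * (a1 * (f-1-a1)) * (f-1-a1 + n) * ((f-a1-d1-1) * (f-a1-d2-1) * (f-a1-d1-d2-1 + n))
       + (a1 * (f-1-a1) - g * (g - 1)) * (E * (f-1-E)) * ((f-a1-d1-1 + n) * (f-a1-d2-1 + n) * (f-a1-d1-d2-1)) * (f-1-a1)) * kn
    = (kn + n * kd) * ((f-1-a1) * ((f-a1-d1-1) * (f-a1-d2-1) * (f-a1-d1-d2-1 + n)) * (g * (g - 1) * (a1 * (f-1-a1) - E * (f-1-E))))"
    unfolding kn_def kd_def hn_def E_def g_def[symmetric] unfolding fg by algebra
  show ?thesis
    unfolding combine[OF nz(2,3,1)] unfolding g_def[symmetric]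
    by (rule frac_eq_eq[THEN iffD2, OF _ _ poly]) (use nz in \<open>simp_all add: g_def\<close>)
qed

theorem summation_generic:
  assumes gen: "generic_params f a1 d1 d2"
  shows "hypergeom_term N (upper_params f a1 d1 d2 N) (lower_params f a1 d1 d2 N) 1
    = closed_numer f a1 d1 d2 N / closed_denom f a1 d1 d2 N
      * ((k_numer f a1 d1 d2 N + of_nat N * k_denom f a1 d1 d2 N) / k_numer f a1 d1 d2 N)"
proof -
  note nz = generic_params_nonzero[OF gen]
  have comb: "(c1 * x * (P * r1) + c2 * y * (P * r2)) / D = P * ((c1 * x * r1 + c2 * y * r2) / D)"
    for c1 x P r1 c2 y r2 D :: complex
    by (simp add: algebra_simps)
  have nz_q: "(f-a1-d1-1) * (f-a1-d2-1) * (f-a1-d1-d2-1 + of_nat N) \<noteq> 0"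
    using nz by simp
  show ?thesis
    unfolding hypergeom_term_eq_jackson_values[OF gen] jackson_value_plus1_eq_closed[OF nz(3)]
      jackson_value_eq_closed[OF nz(4,5,6)] comb
    unfolding k_numer_def k_denom_def h_numer_def h_denom_def
    by (rule arg_cong[of _ _ "\<lambda>x. _ * x"], rule k_ratio_identity)
      (use nz nz_q in \<open>simp_all add: k_numer_def h_numer_def\<close>)
qed

section \<open>Extension to all parameters\<close>

lemma hypergeom_term_times_lower_prod:
  assumes "(\<Prod>b\<leftarrow>bs. pochhammer b N) \<noteq> (0::complex)"
  shows "hypergeom_term N as bs 1 * (\<Prod>b\<leftarrow>bs. pochhammer b N)
    = (\<Sum>m\<le>N. (\<Prod>a\<leftarrow>as. pochhammer a m) * (\<Prod>b\<leftarrow>bs. pochhammer (b + of_nat m) (N - m)) / of_nat (fact m))"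
  unfolding hypergeom_term_def sum_distrib_right
proof (rule sum.cong[OF refl])
  fix m assume "m \<in> {..N}"
  then have split: "(\<Prod>b\<leftarrow>bs. pochhammer b N) = (\<Prod>b\<leftarrow>bs. pochhammer b m) * (\<Prod>b\<leftarrow>bs. pochhammer (b + of_nat m) (N - m))"
    by (induction bs) (simp_all add: pochhammer_product mult_ac)
  with assms have "(\<Prod>b\<leftarrow>bs. pochhammer b m) \<noteq> 0" by simp
  then show "hyp_term as bs 1 m * (\<Prod>b\<leftarrow>bs. pochhammer b N)
      = (\<Prod>a\<leftarrow>as. pochhammer a m) * (\<Prod>b\<leftarrow>bs. pochhammer (b + of_nat m) (N - m)) / of_nat (fact m)"
    unfolding hyp_term_def split by (simp add: field_simps)
qed

definition cleared_defect :: "complex \<Rightarrow> complex \<Rightarrow> complex \<Rightarrow> complex \<Rightarrow> nat \<Rightarrow> complex" where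
  "cleared_defect f a1 d1 d2 N =
     (\<Sum>m\<le>N. (\<Prod>a\<leftarrow>upper_params f a1 d1 d2 N. pochhammer a m)
        * (\<Prod>b\<leftarrow>lower_params f a1 d1 d2 N. pochhammer (b + of_nat m) (N - m)) / of_nat (fact m))
       * closed_denom f a1 d1 d2 N * k_numer f a1 d1 d2 N
     - (\<Prod>b\<leftarrow>lower_params f a1 d1 d2 N. pochhammer b N) * closed_numer f a1 d1 d2 N
       * (k_numer f a1 d1 d2 N + of_nat N * k_denom f a1 d1 d2 N)"

lemma pochhammer_nonzero_if_not_nonpos_int: "\<not> nonpos_int b \<Longrightarrow> pochhammer b N \<noteq> 0"
  unfolding nonpos_int_def by (auto simp: pochhammer_eq_0_iff)

lemma lower_params_nonzero:
  assumes lower: "\<forall>b \<in> set (lower_params f a1 d1 d2 N). \<not> nonpos_int b"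
  shows "(\<Prod>b\<leftarrow>lower_params f a1 d1 d2 N. pochhammer b N) \<noteq> 0" "closed_denom f a1 d1 d2 N \<noteq> 0"
proof -
  show "(\<Prod>b\<leftarrow>lower_params f a1 d1 d2 N. pochhammer b N) \<noteq> 0"
    using lower by (simp add: lower_params_def pochhammer_nonzero_if_not_nonpos_int)
  have "pochhammer (f-a1-d1-d2-1) N \<noteq> 0"
  proof
    assume "pochhammer (f-a1-d1-d2-1) N = 0"
    then obtain j where "j < N" "f-a1-d1-d2-1 = - of_nat j"
      by (auto simp: pochhammer_eq_0_iff)
    then have "2+a1+d1+d2-f - of_nat N = - of_nat (N - 1 - j)"
      by (simp add: of_nat_diff algebra_simps)
    then show False
      using lower unfolding lower_params_def nonpos_int_def by auto
  qed
  then show "closed_denom f a1 d1 d2 N \<noteq> 0"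
    using lower by (simp add: lower_params_def closed_denom_def pochhammer_nonzero_if_not_nonpos_int)
qed

lemma not_nonpos_int_if_not_Ints: "x \<notin> \<int> \<Longrightarrow> \<not> nonpos_int x"
  unfolding nonpos_int_def by auto

lemma lower_params_not_nonpos_int:
  assumes gen: "generic_params f a1 d1 d2"
  shows "\<forall>b \<in> set (lower_params f a1 d1 d2 N). \<not> nonpos_int b"
proof -
  from gen have f: "f \<notin> \<int>" and ints: "f - a1 \<notin> \<int>" "f - d1 \<notin> \<int>" "f - d2 \<notin> \<int>" "- (f - a1 - d1 - d2) \<notin> \<int>"
    unfolding generic_params_def minus_in_Ints_iff by blast+
  have "2+a1+d1+d2-f - of_nat N \<notin> \<int>"
    by (rule not_Ints_if_diff_Ints[OF ints(4)]) (simp add: algebra_simps)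
  moreover have "f + of_nat N \<notin> \<int>" by (rule not_Ints_if_diff_Ints[OF f]) simp
  ultimately show ?thesis
    using ints halves_not_Ints[OF f] by (simp add: lower_params_def not_nonpos_int_if_not_Ints)
qed

lemma cleared_defect_generic:
  assumes gen: "generic_params f a1 d1 d2"
  shows "cleared_defect f a1 d1 d2 N = 0"
proof -
  note nz = lower_params_nonzero[OF lower_params_not_nonpos_int[OF gen]]
  have "hypergeom_term N (upper_params f a1 d1 d2 N) (lower_params f a1 d1 d2 N) 1
      * (\<Prod>b\<leftarrow>lower_params f a1 d1 d2 N. pochhammer b N) * closed_denom f a1 d1 d2 N * k_numer f a1 d1 d2 N
    = (\<Prod>b\<leftarrow>lower_params f a1 d1 d2 N. pochhammer b N) * closed_numer f a1 d1 d2 N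
      * (k_numer f a1 d1 d2 N + of_nat N * k_denom f a1 d1 d2 N)"
    unfolding summation_generic[OF gen] using nz(2) generic_params_nonzero(8)[OF gen] by (simp add: field_simps)
  then show ?thesis
    unfolding cleared_defect_def hypergeom_term_times_lower_prod[OF nz(1), symmetric] by simp
qed

lemma countable_affine_preimage_Ints:
  fixes c \<beta> :: complex
  assumes "\<beta> \<noteq> 0"
  shows "countable {t. c + \<beta> * t \<in> \<int>}"
proof -
  have "{t. c + \<beta> * t \<in> \<int>} \<subseteq> (\<lambda>z. (z - c) / \<beta>) ` \<int>"
    using assms by (auto intro!: image_eqI[where x = "c + \<beta> * _"])
  moreover have "countable ((\<lambda>z. (z - c) / \<beta>) ` (\<int> :: complex set))"
    unfolding Ints_def by simp
  ultimately show ?thesis by (rule countable_subset)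
qed

(* Along the direction (1, 10, 100, 1000) none of the affine forms in generic_params is constant. *)
lemma countable_not_generic_on_line:
  "countable {t. \<not> generic_params (f + t) (a1 + 10*t) (d1 + 100*t) (d2 + 1000*t)}"
proof -
  have line: "f + t - (a1 + 10*t) = f - a1 + -9 * t" "f + t - (d1 + 100*t) = f - d1 + -99 * t"
    "f + t - (d2 + 1000*t) = f - d2 + -999 * t" "f - d1 + -99 * t - (d2 + 1000*t) = f - d1 - d2 + -1099 * t"
    "f - a1 + -9 * t - (d1 + 100*t) = f - a1 - d1 + -109 * t"
    "f - a1 + -9 * t - (d2 + 1000*t) = f - a1 - d2 + -1009 * t"
    "f - a1 - d1 + -109 * t - (d2 + 1000*t) = f - a1 - d1 - d2 + -1109 * t"
    "2*(f + t) - (a1 + 10*t) - (d1 + 100*t) - (d2 + 1000*t) = 2*f - a1 - d1 - d2 + -1108 * t"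
    "2*(f + t) - 2*(a1 + 10*t) - (d1 + 100*t) - (d2 + 1000*t) = 2*f - 2*a1 - d1 - d2 + -1118 * t"
    for t :: complex
    by (simp_all add: algebra_simps)
  have "{t. \<not> generic_params (f + t) (a1 + 10*t) (d1 + 100*t) (d2 + 1000*t)}
    = {t. f + t \<in> \<int>} \<union> {t. a1 + 10 * t \<in> \<int>} \<union> {t. f - a1 + -9 * t \<in> \<int>}
      \<union> {t. f - d1 + -99 * t \<in> \<int>} \<union> {t. f - d2 + -999 * t \<in> \<int>} \<union> {t. f - d1 - d2 + -1099 * t \<in> \<int>}
      \<union> {t. f - a1 - d1 + -109 * t \<in> \<int>} \<union> {t. f - a1 - d2 + -1009 * t \<in> \<int>}
      \<union> {t. f - a1 - d1 - d2 + -1109 * t \<in> \<int>} \<union> {t. 2*f - a1 - d1 - d2 + -1108 * t \<in> \<int>}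
      \<union> {t. 2*f - 2*a1 - d1 - d2 + -1118 * t \<in> \<int>}"
    unfolding generic_params_def line by blast
  moreover have "countable {t. f + t \<in> \<int>}"
    using countable_affine_preimage_Ints[of 1 f] by simp
  ultimately show ?thesis
    by (simp only: countable_Un_iff) (intro conjI countable_affine_preimage_Ints; simp)
qed

lemma closure_complement_countable:
  fixes B :: "'a::euclidean_space set"
  assumes "countable B"
  shows "closure (- B) = UNIV"
proof -
  have "x \<in> closure (- B)" for x
    unfolding closure_approachable
  proof (intro allI impI)
    fix e :: real assume "e > 0"
    then have "\<not> ball x e \<subseteq> B"
      using uncountable_ball assms countable_subset by blast
    then show "\<exists>y \<in> - B. dist y x < e"
      by (auto simp: dist_commute)
  qed
  then show ?thesis by blast
qed

lemma continuous_on_cleared_defect_line: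
  "continuous_on UNIV (\<lambda>t. cleared_defect (f + t) (a1 + 10*t) (d1 + 100*t) (d2 + 1000*t) N)"
  unfolding cleared_defect_def upper_params_def lower_params_def closed_numer_def closed_denom_def
    k_numer_def k_denom_def h_numer_def h_denom_def
  by (simp only: list.map prod_list.Cons prod_list.Nil) (intro continuous_intros; simp)

lemma cleared_defect_eq_0: "cleared_defect f a1 d1 d2 N = 0"
proof -
  define \<phi> where "\<phi> = (\<lambda>t. cleared_defect (f + t) (a1 + 10*t) (d1 + 100*t) (d2 + 1000*t) N)"
  define B where "B = {t. \<not> generic_params (f + t) (a1 + 10*t) (d1 + 100*t) (d2 + 1000*t)}"
  have closure: "closure (- B) = UNIV"
    unfolding B_def by (rule closure_complement_countable[OF countable_not_generic_on_line])
  have "\<phi> 0 = 0"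
  proof (rule continuous_constant_on_closure[of "- B" \<phi>])
    show "continuous_on (closure (- B)) \<phi>"
      unfolding closure \<phi>_def by (rule continuous_on_cleared_defect_line)
    show "\<phi> t = 0" if "t \<in> - B" for t
    proof -
      from that have "generic_params (f + t) (a1 + 10*t) (d1 + 100*t) (d2 + 1000*t)"
        by (simp add: B_def)
      then show ?thesis unfolding \<phi>_def by (rule cleared_defect_generic)
    qed
    show "0 \<in> closure (- B)" unfolding closure ..
  qed
  then show ?thesis by (simp add: \<phi>_def)
qed

lemma summation_nondegenerate:
  assumes lower: "\<forall>b \<in> set (lower_params f a1 d1 d2 N). \<not> nonpos_int b"
    and kn: "k_numer f a1 d1 d2 N \<noteq> 0"
  shows "hypergeom_term N (upper_params f a1 d1 d2 N) (lower_params f a1 d1 d2 N) 1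
    = closed_numer f a1 d1 d2 N / closed_denom f a1 d1 d2 N
      * ((k_numer f a1 d1 d2 N + of_nat N * k_denom f a1 d1 d2 N) / k_numer f a1 d1 d2 N)"
proof -
  note nz = lower_params_nonzero[OF lower]
  have solve: "H = U / D * (V / K)"
    if "H * P * D * K = P * U * V" "P \<noteq> 0" "D \<noteq> 0" "K \<noteq> 0" for H P D K U V :: complex
  proof -
    from that(1) have "P * (H * D * K) = P * (U * V)" by (simp only: mult_ac)
    with that(2) have "H * D * K = U * V" by simp
    with that(3,4) show ?thesis by (simp add: field_simps)
  qed
  have "hypergeom_term N (upper_params f a1 d1 d2 N) (lower_params f a1 d1 d2 N) 1
      * (\<Prod>b\<leftarrow>lower_params f a1 d1 d2 N. pochhammer b N) * closed_denom f a1 d1 d2 N * k_numer f a1 d1 d2 N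
    = (\<Prod>b\<leftarrow>lower_params f a1 d1 d2 N. pochhammer b N) * closed_numer f a1 d1 d2 N
      * (k_numer f a1 d1 d2 N + of_nat N * k_denom f a1 d1 d2 N)"
    using cleared_defect_eq_0[of f a1 d1 d2 N]
    unfolding cleared_defect_def hypergeom_term_times_lower_prod[OF nz(1)] by simp
  from solve[OF this nz(1) nz(2) kn] show ?thesis .
qed

lemma pochhammer_k_ratio:
  assumes hden: "f/2*(f/2-1) - a1*(2*f-2-d1-d2-a1+ of_nat N) \<noteq> 0"
    and h_def: "h = (f/2*(f-1-d1-d2+ of_nat N)*(1-f/2)) / (f/2*(f/2-1) - a1*(2*f-2-d1-d2-a1+ of_nat N))"
    and kden: "d1*d2 - h*(1+d1+d2+a1-f) \<noteq> 0"
    and k_def: "k = h*(1+d1+a1-f)*(1+d2+a1-f) / (d1*d2 - h*(1+d1+d2+a1-f))"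
    and kpoch: "pochhammer k N \<noteq> 0" and "N \<noteq> 0"
  shows "k_numer f a1 d1 d2 N \<noteq> 0"
    "pochhammer (k+1) N / pochhammer k N
      = (k_numer f a1 d1 d2 N + of_nat N * k_denom f a1 d1 d2 N) / k_numer f a1 d1 d2 N"
proof -
  from kpoch \<open>N \<noteq> 0\<close> have k0: "k \<noteq> 0" by (auto simp: pochhammer_0_left)
  have h: "h = h_numer f d1 d2 N / h_denom f a1 d1 d2 N" and hd: "h_denom f a1 d1 d2 N \<noteq> 0"
    using h_def hden unfolding h_numer_def h_denom_def by simp_all
  have kd_eq: "k_denom f a1 d1 d2 N = h_denom f a1 d1 d2 N * (d1*d2 - h*(1+d1+d2+a1-f))"
    unfolding k_denom_def h using hd by (simp add: field_simps)
  with hd kden have kd: "k_denom f a1 d1 d2 N \<noteq> 0" by simp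
  have "k = k_numer f a1 d1 d2 N / k_denom f a1 d1 d2 N"
    unfolding k_def kd_eq k_numer_def h using hd by (simp add: field_simps)
  with kd have kn_eq: "k_numer f a1 d1 d2 N = k * k_denom f a1 d1 d2 N" by simp
  with kd k0 show "k_numer f a1 d1 d2 N \<noteq> 0" by simp
  have "pochhammer (k+1) N / pochhammer k N = (k + of_nat N) / k"
    using pochhammer_plus1[OF k0, of N] kpoch by simp
  also have "\<dots> = (k_numer f a1 d1 d2 N + of_nat N * k_denom f a1 d1 d2 N) / k_numer f a1 d1 d2 N"
    unfolding kn_eq using kd k0 by (simp add: field_simps)
  finally show "pochhammer (k+1) N / pochhammer k N
      = (k_numer f a1 d1 d2 N + of_nat N * k_denom f a1 d1 d2 N) / k_numer f a1 d1 d2 N" .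
qed

theorem mainTheorem9:
  fixes N :: nat and f a1 d1 d2 h k :: complex
  assumes lower: "\<forall>b \<in> set [(f-1)/2, f-a1, f/2-1, f-d1, f-d2, 2+a1+d1+d2-f- of_nat N, f+ of_nat N].
                    \<not> nonpos_int b"
    and hden: "f/2*(f/2-1) - a1*(2*f-2-d1-d2-a1+ of_nat N) \<noteq> 0"
    and h_def: "h = (f/2*(f-1-d1-d2+ of_nat N)*(1-f/2)) / (f/2*(f/2-1) - a1*(2*f-2-d1-d2-a1+ of_nat N))"
    and kden: "d1*d2 - h*(1+d1+d2+a1-f) \<noteq> 0"
    and k_def: "k = h*(1+d1+a1-f)*(1+d2+a1-f) / (d1*d2 - h*(1+d1+d2+a1-f))"
    and kpoch: "pochhammer k N \<noteq> 0"
  shows "hypergeom_term N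
           [f-1, (f+1)/2, a1, f/2+1, d1, d2, 2*f-2-d1-d2-a1+ of_nat N, - of_nat N]
           [(f-1)/2, f-a1, f/2-1, f-d1, f-d2, 2+a1+d1+d2-f- of_nat N, f+ of_nat N] 1
       = (pochhammer f N * pochhammer (f-d1-d2) N * pochhammer (f-a1-d1-1) N * pochhammer (f-a1-d2-1) N)
         / (pochhammer (f-d1) N * pochhammer (f-d2) N * pochhammer (f-a1) N * pochhammer (f-a1-d1-d2-1) N)
         * (pochhammer (k+1) N / pochhammer k N)"
proof (cases "N = 0")
  case True
  then show ?thesis by (simp add: hypergeom_term_def hyp_term_def)
next
  case False
  note k = pochhammer_k_ratio[OF hden h_def kden k_def kpoch False]
  show ?thesis
    using summation_nondegenerate[OF lower[folded lower_params_def] k(1)]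
    unfolding k(2) upper_params_def lower_params_def closed_numer_def closed_denom_def by simp
qed

end
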